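(* Let $C>0$, $c_{1,i}=\frac{\beta_i}{2C}$, $r=\sqrt{u^2+v^2}$ and for $i=1,2$ $\varphi_{1,i}(u,v,z)=\frac{r^{p_i}z^{q_i}}{(C^{-2}+1)^{\beta_i/2}}\left|\frac{r}{v}\right|^{\beta_i}+c_{1,i}r^{p_i}z^{q_i}\left|\frac{r}{v}\right|^{\beta_i}\int_{u/|v|}^{1/C}(t^2+1)^{\frac{\alpha_i-\beta_i-1}{2}}\,dt.$ Then for all $r_*>0$ sufficiently large, on $\mathcal{R}_1=\{(u,v,z): r\ge r_*,\ C^{-1}|v|\ge u\ge-C|v|,\ 0<z\le1\}$, $\mathcal{L}\varphi_{1,i}(u,v,z)\le-\frac{c_{1,i}}{2}r^{p_i+1}z^{q_i}\left|\frac{r}{v}\right|^{\alpha_i}$, $i=1,2$, and for all $(u,v,1)\in\mathcal{R}_1$, $\mathcal{Q}(\varphi_{1,1}+\varphi_{1,2})(u,v,1)\le-\left(\tfrac{q_2}{2}-\tfrac{p_2}{6}\right)r^{p_2}.$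
   Context: Fix $\gamma>0$, $h\in(0,1)$, $\kappa_1,\kappa_2>0$ and $\alpha_h=\frac13+\frac23h$. Constants $p_i,q_i,\alpha_i,\beta_i$ ($i=1,2$) satisfy $p_1>0$, $p_2>0$, $q_1=0$, $q_2>0$, $0<\alpha_hp_i-(1-h)q_i=\beta_i<\alpha_i<1$, $q_2>\frac13p_2+\frac12\alpha_2$, $p_2>p_1$, $p_2+\frac32\alpha_2>p_1+\frac32\alpha_1$. The operators are $\mathcal{L}=-\gamma u\partial_u-\gamma v\partial_v-\frac{\alpha_hu^2-v^2}{z^{2/3}}\partial_u-(\alpha_h+1)\frac{uv}{z^{2/3}}\partial_v+(1-h)uz^{1/3}\partial_z+\frac{\kappa_1}{z^{2/3}}\partial_u^2+\frac{\kappa_2}{z^{2/3}}\partial_v^2$, $\mathcal{Q}=\frac{u}{3z}\partial_u+\frac{v}{3z}\partial_v-\partial_z$. *)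

theory Defs
  imports "HOL-Analysis.Analysis"
begin

definition alpha_h :: "real \<Rightarrow> real" where
  "alpha_h h = 1/3 + 2/3 * h"

definition pd_u :: "(real \<Rightarrow> real \<Rightarrow> real \<Rightarrow> real) \<Rightarrow> real \<Rightarrow> real \<Rightarrow> real \<Rightarrow> real" where
  "pd_u f u v z = deriv (\<lambda>x. f x v z) u"
definition pd_v :: "(real \<Rightarrow> real \<Rightarrow> real \<Rightarrow> real) \<Rightarrow> real \<Rightarrow> real \<Rightarrow> real \<Rightarrow> real" where
  "pd_v f u v z = deriv (\<lambda>y. f u y z) v"
definition pd_z :: "(real \<Rightarrow> real \<Rightarrow> real \<Rightarrow> real) \<Rightarrow> real \<Rightarrow> real \<Rightarrow> real \<Rightarrow> real" where
  "pd_z f u v z = deriv (\<lambda>w. f u v w) z"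

definition Lop :: "real \<Rightarrow> real \<Rightarrow> real \<Rightarrow> real \<Rightarrow> (real \<Rightarrow> real \<Rightarrow> real \<Rightarrow> real)
    \<Rightarrow> real \<Rightarrow> real \<Rightarrow> real \<Rightarrow> real" where
  "Lop \<gamma> h \<kappa>1 \<kappa>2 f u v z =
     - \<gamma> * u * pd_u f u v z - \<gamma> * v * pd_v f u v z
     - (alpha_h h * u^2 - v^2) / z powr (2/3) * pd_u f u v z
     - (alpha_h h + 1) * u * v / z powr (2/3) * pd_v f u v z
     + (1 - h) * u * z powr (1/3) * pd_z f u v z
     + \<kappa>1 / z powr (2/3) * pd_u (pd_u f) u v z
     + \<kappa>2 / z powr (2/3) * pd_v (pd_v f) u v z"

definition Qop :: "(real \<Rightarrow> real \<Rightarrow> real \<Rightarrow> real) \<Rightarrow> real \<Rightarrow> real \<Rightarrow> real \<Rightarrow> real" where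
  "Qop f u v z = u / (3*z) * pd_u f u v z + v / (3*z) * pd_v f u v z - pd_z f u v z"

text \<open>The test function phi_{1,i} with parameters C, p = p_i, q = q_i,
  a = alpha_i, b = beta_i; the integral is the oriented interval integral.\<close>
definition phi1 :: "real \<Rightarrow> real \<Rightarrow> real \<Rightarrow> real \<Rightarrow> real \<Rightarrow> real \<Rightarrow> real \<Rightarrow> real \<Rightarrow> real" where
  "phi1 C p q a b u v z =
     (let r = sqrt (u^2 + v^2); c = b / (2*C) in
      r powr p * z powr q / (C powr (-2) + 1) powr (b/2) * \<bar>r / v\<bar> powr b
      + c * r powr p * z powr q * \<bar>r / v\<bar> powr b *
        (LBINT t = u / \<bar>v\<bar>..1/C. (t^2 + 1) powr ((a - b - 1)/2)))"

definition region1 :: "real \<Rightarrow> real \<Rightarrow> real \<Rightarrow> real \<Rightarrow> real \<Rightarrow> bool" where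
  "region1 rs C u v z \<longleftrightarrow> sqrt (u^2 + v^2) \<ge> rs \<and> \<bar>v\<bar> / C \<ge> u \<and> u \<ge> - C * \<bar>v\<bar>
      \<and> 0 < z \<and> z \<le> 1"

end

theory Submission
  imports Defs
begin

(*
  Write r = sqrt (u^2 + v^2) and s = u/|v|.  Each phi_{1,i} equals |v|^p z^q H(s) with
  H(s) = (s^2+1)^((p+beta)/2) B(s), where B' = -c (s^2+1)^((alpha-beta-1)/2) and c = beta/(2C).
  For functions of this form, L is -gamma p times the function (Euler's identity), plus
  z^(-2/3) |v|^(p+1) times the drift (s^2+1) H' - (p + alpha_h p - (1-h) q) s H, plus
  z^(-2/3) |v|^(p-2) times a second-order expression in H.  Since beta = alpha_h p - (1-h) q, the
  drift is exactly -c (s^2+1)^((p+alpha+1)/2), which is what the integral in B is designed for, and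
  the drift term equals -c r^(p+1) z^q |r/v|^alpha z^(-2/3).  The second-order term is bounded on
  the cone -C <= s <= 1/C, so half of the drift absorbs it once |v| is large; and z^(-2/3) >= 1.
  Comparing derivatives gives B(s) >= theta (s^2+1)^(-beta/2) for s <= 1/C with theta > 1/2, hence
  phi_{1,i} >= theta r^p z^q.  Q multiplies |v|^p z^q H(s) by (p/3 - q)/z, so at z = 1 the
  phi_{1,2} term contributes at most -(q2 - p2/3) theta r^p2, which dominates the phi_{1,1} term,
  of order r^p1, because p1 < p2.
*)

section \<open>One-variable calculus\<close>

lemma has_real_derivative_LBINT_lower:
  fixes f :: "real \<Rightarrow> real" and x s :: real
  assumes "continuous_on UNIV f"
  shows "((\<lambda>s. LBINT t=s..x. f t) has_real_derivative - f s) (at s)"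
proof -
  have "((\<lambda>y. LBINT t=x..y. f t) has_vector_derivative f s) (at s within {min s x - 1..max s x + 1})"
    by (rule interval_integral_FTC2) (auto intro: continuous_on_subset[OF assms])
  then have "((\<lambda>y. LBINT t=x..y. f t) has_real_derivative f s) (at s)"
    by (simp add: has_real_derivative_iff_has_vector_derivative at_within_Icc_at)
  then show ?thesis
    by (subst interval_integral_endpoints_reverse) (rule DERIV_minus)
qed

lemma has_real_derivative_abs [derivative_intros]:
  assumes "(f has_real_derivative D) (at x within S)" "f x \<noteq> 0"
  shows "((\<lambda>x. \<bar>f x\<bar>) has_real_derivative sgn (f x) * D) (at x within S)"
proof -
  have "(abs has_real_derivative sgn y) (at y)" if "y \<noteq> 0" for y :: real
  proof (cases "y > 0")
    case True
    have "(abs has_real_derivative 1) (at y)"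
      by (rule has_field_derivative_transform_within_open[OF DERIV_ident, where S="{0<..}"]) (use True in auto)
    with True show ?thesis by simp
  next
    case False
    with that have "y < 0" by simp
    have "(abs has_real_derivative -1) (at y)"
      by (rule has_field_derivative_transform_within_open[OF DERIV_minus[OF DERIV_ident], where S="{..<0}"])
        (use \<open>y < 0\<close> in auto)
    with \<open>y < 0\<close> show ?thesis by simp
  qed
  from DERIV_chain2[OF this[OF assms(2)] assms(1)] show ?thesis .
qed

lemma has_real_derivative_sgn:
  assumes "x \<noteq> 0"
  shows "(sgn has_real_derivative 0) (at (x::real))"
proof (cases "x > 0")
  case True
  show ?thesis
    by (rule has_field_derivative_transform_within_open[OF DERIV_const, where S="{0<..}"]) (use True in auto)
next
  case False
  with assms have "x < 0" by simp
  show ?thesis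
    by (rule has_field_derivative_transform_within_open[OF DERIV_const, where S="{..<0}"]) (use \<open>x < 0\<close> in auto)
qed

lemma sq_plus_one_pos [simp]: "0 < (s::real)^2 + 1"
  by (intro add_nonneg_pos) auto

lemma sq_plus_one_neq_zero [simp]: "(s::real)^2 + 1 \<noteq> 0"
  using sq_plus_one_pos[of s] by linarith

lemma sq_plus_one_powr_mult:
  "x + y = z \<Longrightarrow> ((s::real)^2 + 1) powr x * (s^2 + 1) powr y = (s^2 + 1) powr z"
  by (metis powr_add)

lemma has_real_derivative_sq_plus_one_powr:
  "((\<lambda>s. (s^2 + 1) powr k) has_real_derivative 2 * k * s * (s^2 + 1) powr (k - 1)) (at s)"
  by (rule DERIV_cong[OF DERIV_fun_powr[of "\<lambda>s. s^2 + 1" "2 * s"]]) (auto intro!: derivative_eq_intros)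

lemma divide_sqrt_sq_plus_one_mono:
  fixes t x :: real
  assumes "0 \<le> t" "t \<le> x"
  shows "t / sqrt (t^2 + 1) \<le> x / sqrt (x^2 + 1)"
proof -
  have "t^2 * (x^2 + 1) \<le> x^2 * (t^2 + 1)"
    using assms by (simp add: algebra_simps power_mono)
  then have "sqrt (t^2 * (x^2 + 1)) \<le> sqrt (x^2 * (t^2 + 1))"
    by simp
  then have "t * sqrt (x^2 + 1) \<le> x * sqrt (t^2 + 1)"
    using assms by (simp add: real_sqrt_mult)
  then show ?thesis
    by (simp add: divide_simps)
qed

lemma eventually_powr_le_powr:
  fixes A K p q :: real
  assumes "p < q" "0 < K"
  shows "\<forall>\<^sub>F x in at_top. A * x powr p \<le> K * x powr q"
proof -
  have "((\<lambda>x. x powr (p - q)) \<longlongrightarrow> 0) at_top"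
    using assms(1) by (intro tendsto_neg_powr filterlim_ident) simp
  then have "\<forall>\<^sub>F x in at_top. x powr (p - q) < K / (\<bar>A\<bar> + 1)"
    using assms(2) by (intro order_tendstoD) (auto intro: divide_pos_pos add_nonneg_pos)
  with eventually_gt_at_top[of 0] show ?thesis
  proof eventually_elim
    case (elim x)
    have "A * x powr p \<le> \<bar>A\<bar> * x powr (p - q) * x powr q"
      using elim by (simp add: mult.assoc abs_mult_pos flip: powr_add)
    also have "\<dots> \<le> \<bar>A\<bar> * (K / (\<bar>A\<bar> + 1)) * x powr q"
      using elim by (intro mult_right_mono mult_left_mono) auto
    also have "\<dots> \<le> K * x powr q"
      using assms(2) by (intro mult_right_mono) (auto simp: field_simps)
    finally show ?case .
  qed
qed

section \<open>Functions of the form \<open>|v|\<^sup>p z\<^sup>q G(u/|v|)\<close>\<close>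

definition profile_fun :: "real \<Rightarrow> real \<Rightarrow> (real \<Rightarrow> real) \<Rightarrow> real \<Rightarrow> real \<Rightarrow> real \<Rightarrow> real" where
  "profile_fun p q G u v z = \<bar>v\<bar> powr p * z powr q * G (u / \<bar>v\<bar>)"

definition drift_profile :: "real \<Rightarrow> real \<Rightarrow> real \<Rightarrow> (real \<Rightarrow> real) \<Rightarrow> (real \<Rightarrow> real) \<Rightarrow> real \<Rightarrow> real" where
  "drift_profile h p q G G' s = (s^2 + 1) * G' s - (p + alpha_h h * p - (1 - h) * q) * s * G s"

definition diffusion_profile :: "real \<Rightarrow> real \<Rightarrow> real \<Rightarrow> (real \<Rightarrow> real) \<Rightarrow> (real \<Rightarrow> real) \<Rightarrow> (real \<Rightarrow> real)
    \<Rightarrow> real \<Rightarrow> real" where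
  "diffusion_profile \<kappa>1 \<kappa>2 p G G' G'' s =
     \<kappa>1 * G'' s + \<kappa>2 * (p * (p - 1) * G s - 2 * (p - 1) * s * G' s + s^2 * G'' s)"

context
  fixes G G' :: "real \<Rightarrow> real"
  assumes G': "\<And>s. (G has_real_derivative G' s) (at s)"
begin

lemma profile_fun_has_derivative_u:
  assumes "v \<noteq> 0"
  shows "((\<lambda>x. profile_fun p q G x v z) has_real_derivative profile_fun (p - 1) q G' u v z) (at u)"
proof -
  have "((\<lambda>x. \<bar>v\<bar> powr p * z powr q * G (x / \<bar>v\<bar>)) has_real_derivative
      \<bar>v\<bar> powr p * z powr q * (G' (u / \<bar>v\<bar>) * (1 / \<bar>v\<bar>))) (at u)"
    using assms by (intro DERIV_cmult DERIV_chain2[OF G'] derivative_eq_intros) (auto simp: field_simps)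
  then show ?thesis
    using assms by (simp add: profile_fun_def powr_diff)
qed

lemma profile_fun_has_derivative_v:
  assumes "v \<noteq> 0"
  shows "((\<lambda>y. profile_fun p q G u y z) has_real_derivative
      sgn v * profile_fun (p - 1) q (\<lambda>s. p * G s - s * G' s) u v z) (at v)"
proof -
  have d_abs: "((\<lambda>y. \<bar>y\<bar>) has_real_derivative sgn v) (at v)"
    using has_real_derivative_abs[OF DERIV_ident] assms by simp
  have d_pow: "((\<lambda>y. \<bar>y\<bar> powr p) has_real_derivative p * \<bar>v\<bar> powr (p - 1) * sgn v) (at v)"
    using DERIV_chain2[OF has_real_derivative_powr d_abs] assms by simp
  have d_quot: "((\<lambda>y. u / \<bar>y\<bar>) has_real_derivative - (u / \<bar>v\<bar>) * sgn v / \<bar>v\<bar>) (at v)"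
    using assms by (auto intro!: derivative_eq_intros simp: power2_eq_square)
  have d: "((\<lambda>y. \<bar>y\<bar> powr p * z powr q * G (u / \<bar>y\<bar>)) has_real_derivative
      p * \<bar>v\<bar> powr (p - 1) * sgn v * z powr q * G (u / \<bar>v\<bar>)
      + G' (u / \<bar>v\<bar>) * (- (u / \<bar>v\<bar>) * sgn v / \<bar>v\<bar>) * (\<bar>v\<bar> powr p * z powr q)) (at v)"
    by (intro DERIV_mult DERIV_cmult_right d_pow DERIV_chain2[OF G' d_quot])
  have e: "\<bar>v\<bar> powr p = \<bar>v\<bar> * \<bar>v\<bar> powr (p - 1)"
    using assms by (simp add: powr_diff)
  show ?thesis
    unfolding profile_fun_def by (rule DERIV_cong[OF d]) (use assms e in \<open>simp add: field_simps\<close>)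
qed

lemma profile_fun_has_derivative_z:
  assumes "z > 0"
  shows "((\<lambda>w. profile_fun p q G u v w) has_real_derivative q * profile_fun p (q - 1) G u v z) (at z)"
  unfolding profile_fun_def
  by (rule DERIV_cong[OF DERIV_cmult_right[OF DERIV_cmult[OF has_real_derivative_powr[OF assms]]]])
    (simp add: algebra_simps)

lemma pd_u_profile_fun:
  "v \<noteq> 0 \<Longrightarrow> pd_u (profile_fun p q G) u v z = profile_fun (p - 1) q G' u v z"
  unfolding pd_u_def by (rule DERIV_imp_deriv[OF profile_fun_has_derivative_u])

lemma pd_v_profile_fun:
  "v \<noteq> 0 \<Longrightarrow> pd_v (profile_fun p q G) u v z = sgn v * profile_fun (p - 1) q (\<lambda>s. p * G s - s * G' s) u v z"
  unfolding pd_v_def by (rule DERIV_imp_deriv[OF profile_fun_has_derivative_v])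

lemma pd_z_profile_fun:
  "z > 0 \<Longrightarrow> pd_z (profile_fun p q G) u v z = q * profile_fun p (q - 1) G u v z"
  unfolding pd_z_def by (rule DERIV_imp_deriv[OF profile_fun_has_derivative_z])

end

lemma pd_u_pd_u_profile_fun:
  assumes G': "\<And>s. (G has_real_derivative G' s) (at s)"
    and G'': "\<And>s. (G' has_real_derivative G'' s) (at s)"
    and "v \<noteq> 0"
  shows "pd_u (pd_u (profile_fun p q G)) u v z = profile_fun (p - 2) q G'' u v z"
proof -
  have "(\<lambda>x. pd_u (profile_fun p q G) x v z) = (\<lambda>x. profile_fun (p - 1) q G' x v z)"
    using pd_u_profile_fun[OF G' assms(3)] by auto
  then show ?thesis
    using pd_u_profile_fun[OF G'' assms(3), of "p - 1" q u z] by (simp add: pd_u_def)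
qed

lemma pd_v_pd_v_profile_fun:
  assumes G': "\<And>s. (G has_real_derivative G' s) (at s)"
    and G'': "\<And>s. (G' has_real_derivative G'' s) (at s)"
    and "v \<noteq> 0"
  shows "pd_v (pd_v (profile_fun p q G)) u v z
    = profile_fun (p - 2) q (\<lambda>s. p * (p - 1) * G s - 2 * (p - 1) * s * G' s + s^2 * G'' s) u v z"
proof -
  define K where "K = (\<lambda>s. p * G s - s * G' s)"
  have K': "(K has_real_derivative p * G' s - (G' s + s * G'' s)) (at s)" for s
    unfolding K_def by (auto intro!: derivative_eq_intros G' G'')
  have "((\<lambda>y. sgn y * profile_fun (p - 1) q K u y z) has_real_derivative
      profile_fun (p - 2) q (\<lambda>s. p * (p - 1) * G s - 2 * (p - 1) * s * G' s + s^2 * G'' s) u v z) (at v)"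
    by (rule DERIV_cong[OF DERIV_mult[OF has_real_derivative_sgn profile_fun_has_derivative_v[OF K']]])
      (use assms(3) in \<open>simp_all add: profile_fun_def K_def algebra_simps power2_eq_square\<close>)
  then have "((\<lambda>y. pd_v (profile_fun p q G) u y z) has_real_derivative
      profile_fun (p - 2) q (\<lambda>s. p * (p - 1) * G s - 2 * (p - 1) * s * G' s + s^2 * G'' s) u v z) (at v)"
    by (rule has_field_derivative_transform_within_open[where S="- {0}"])
      (use assms(3) pd_v_profile_fun[OF G'] in \<open>auto simp: K_def\<close>)
  then show ?thesis
    unfolding pd_v_def by (rule DERIV_imp_deriv)
qed

lemma Lop_profile_fun:
  assumes G': "\<And>s. (G has_real_derivative G' s) (at s)"
    and G'': "\<And>s. (G' has_real_derivative G'' s) (at s)"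
    and v: "v \<noteq> 0" and z: "z > 0"
  shows "Lop \<gamma> h \<kappa>1 \<kappa>2 (profile_fun p q G) u v z =
    - \<gamma> * p * profile_fun p q G u v z
    + (profile_fun (p + 1) q (drift_profile h p q G G') u v z
       + profile_fun (p - 2) q (diffusion_profile \<kappa>1 \<kappa>2 p G G' G'') u v z) / z powr (2/3)"
proof -
  define V where "V = \<bar>v\<bar>"
  define s where "s = u / V"
  define Z where "Z = z powr (2/3)"
  have V: "V > 0" and Z: "Z > 0"
    using v z by (auto simp: V_def Z_def)
  define \<sigma> where "\<sigma> = sgn v"
  have u_eq: "u = s * V" and v_eq: "v = \<sigma> * V" and \<sigma>: "\<sigma> = 1 \<or> \<sigma> = -1"
    using V v by (auto simp: s_def V_def \<sigma>_def sgn_mult_abs sgn_real_def)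
  have "z powr (1/3) * Z = z"
    using z by (simp add: Z_def flip: powr_add)
  then have powrs: "V powr (p - 1) = V powr p / V" "V powr (p - 2) = V powr p / V^2"
      "V powr (p + 1) = V powr p * V" "z powr (q - 1) = z powr q / z" "z powr (1/3) = z / Z"
    using V z Z by (auto simp: powr_diff powr_add field_simps)
  show ?thesis
    unfolding Lop_def pd_u_profile_fun[OF G' v] pd_v_profile_fun[OF G' v] pd_z_profile_fun[OF G' z]
      pd_u_pd_u_profile_fun[OF G' G'' v] pd_v_pd_v_profile_fun[OF G' G'' v]
    unfolding profile_fun_def V_def[symmetric] s_def[symmetric] Z_def[symmetric] \<sigma>_def[symmetric]
      powrs alpha_h_def drift_profile_def diffusion_profile_def
    unfolding u_eq v_eq
    using \<sigma> V Z z by (elim disjE) (simp_all add: field_simps power2_eq_square)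
qed

lemma Qop_add:
  fixes f g :: "real \<Rightarrow> real \<Rightarrow> real \<Rightarrow> real"
  assumes "(\<lambda>x. f x v z) field_differentiable at u" "(\<lambda>x. g x v z) field_differentiable at u"
    and "(\<lambda>y. f u y z) field_differentiable at v" "(\<lambda>y. g u y z) field_differentiable at v"
    and "(\<lambda>w. f u v w) field_differentiable at z" "(\<lambda>w. g u v w) field_differentiable at z"
  shows "Qop (\<lambda>u v z. f u v z + g u v z) u v z = Qop f u v z + Qop g u v z"
  using assms unfolding Qop_def pd_u_def pd_v_def pd_z_def by (simp add: algebra_simps)

lemma Qop_profile_fun:
  assumes G': "\<And>s. (G has_real_derivative G' s) (at s)" and v: "v \<noteq> 0" and z: "z > 0"
  shows "Qop (profile_fun p q G) u v z = (p/3 - q) / z * profile_fun p q G u v z"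
proof -
  define V where "V = \<bar>v\<bar>"
  define s where "s = u / V"
  define \<sigma> where "\<sigma> = sgn v"
  have V: "V > 0"
    using v by (simp add: V_def)
  have u_eq: "u = s * V" and v_eq: "v = \<sigma> * V" and \<sigma>: "\<sigma> = 1 \<or> \<sigma> = -1"
    using V v by (auto simp: s_def V_def \<sigma>_def sgn_mult_abs sgn_real_def)
  have powrs: "V powr (p - 1) = V powr p / V" "z powr (q - 1) = z powr q / z"
    using V z by (simp_all add: powr_diff)
  show ?thesis
    unfolding Qop_def pd_u_profile_fun[OF G' v] pd_v_profile_fun[OF G' v] pd_z_profile_fun[OF G' z]
    unfolding profile_fun_def V_def[symmetric] s_def[symmetric] \<sigma>_def[symmetric] powrs
    unfolding u_eq v_eq
    using \<sigma> V z by (elim disjE) (simp_all add: field_simps)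
qed

lemma Qop_profile_fun_add:
  assumes G1': "\<And>s. (G1 has_real_derivative G1' s) (at s)"
    and G2': "\<And>s. (G2 has_real_derivative G2' s) (at s)"
    and v: "v \<noteq> 0" and z: "z > 0"
  shows "Qop (\<lambda>u v z. profile_fun p1 q1 G1 u v z + profile_fun p2 q2 G2 u v z) u v z
    = ((p1/3 - q1) * profile_fun p1 q1 G1 u v z + (p2/3 - q2) * profile_fun p2 q2 G2 u v z) / z"
proof -
  have differentiable: "(\<lambda>x. profile_fun p q G x v z) field_differentiable at u
      \<and> (\<lambda>y. profile_fun p q G u y z) field_differentiable at v
      \<and> (\<lambda>w. profile_fun p q G u v w) field_differentiable at z"
    if "\<And>s. (G has_real_derivative G' s) (at s)" for p q G G'
    unfolding field_differentiable_def
    using profile_fun_has_derivative_u[OF that v] profile_fun_has_derivative_v[OF that v]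
      profile_fun_has_derivative_z[OF that z] by blast
  have "Qop (\<lambda>u v z. profile_fun p1 q1 G1 u v z + profile_fun p2 q2 G2 u v z) u v z
      = Qop (profile_fun p1 q1 G1) u v z + Qop (profile_fun p2 q2 G2) u v z"
    using differentiable[OF G1'] differentiable[OF G2'] by (intro Qop_add) auto
  then show ?thesis
    by (simp add: Qop_profile_fun[OF G1' v z] Qop_profile_fun[OF G2' v z] add_divide_distrib)
qed

lemma profile_fun_bounded_on_cone:
  assumes C: "C > 0" and G: "continuous_on {-C..1/C} G"
  shows "\<exists>M. \<forall>u v z. - C * \<bar>v\<bar> \<le> u \<longrightarrow> u \<le> \<bar>v\<bar> / C \<longrightarrow>
    \<bar>profile_fun p q G u v z\<bar> \<le> M * \<bar>v\<bar> powr p * z powr q"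
proof -
  have "bounded (G ` {-C..1/C})"
    using G by (intro compact_imp_bounded compact_continuous_image compact_Icc)
  then obtain M where M: "\<And>s. s \<in> {-C..1/C} \<Longrightarrow> \<bar>G s\<bar> \<le> M"
    unfolding bounded_real by blast
  show ?thesis
  proof (intro exI[of _ M] allI impI)
    fix u v z :: real
    assume "- C * \<bar>v\<bar> \<le> u" "u \<le> \<bar>v\<bar> / C"
    then have "u / \<bar>v\<bar> \<in> {-C..1/C}"
      using C by (cases "v = 0") (auto simp: field_simps)
    then have "\<bar>v\<bar> powr p * z powr q * \<bar>G (u / \<bar>v\<bar>)\<bar> \<le> \<bar>v\<bar> powr p * z powr q * M"
      using M by (intro mult_left_mono) auto
    then show "\<bar>profile_fun p q G u v z\<bar> \<le> M * \<bar>v\<bar> powr p * z powr q"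
      by (simp add: profile_fun_def abs_mult mult_ac)
  qed
qed

section \<open>The profile of \<open>\<phi>\<^sub>1\<close>\<close>

definition angular_factor :: "real \<Rightarrow> real \<Rightarrow> real \<Rightarrow> real \<Rightarrow> real" where
  "angular_factor C a b s = 1 / (C powr (-2) + 1) powr (b/2)
     + b / (2*C) * (LBINT t = s..1/C. (t^2 + 1) powr ((a - b - 1)/2))"

definition phi1_profile :: "real \<Rightarrow> real \<Rightarrow> real \<Rightarrow> real \<Rightarrow> real \<Rightarrow> real" where
  "phi1_profile C p a b s = (s^2 + 1) powr ((p + b)/2) * angular_factor C a b s"

definition phi1_profile' :: "real \<Rightarrow> real \<Rightarrow> real \<Rightarrow> real \<Rightarrow> real \<Rightarrow> real" where
  "phi1_profile' C p a b s = (p + b) * s * (s^2 + 1) powr ((p + b)/2 - 1) * angular_factor C a b s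
     - b / (2*C) * (s^2 + 1) powr ((p + a - 1)/2)"

definition phi1_profile'' :: "real \<Rightarrow> real \<Rightarrow> real \<Rightarrow> real \<Rightarrow> real \<Rightarrow> real" where
  "phi1_profile'' C p a b s =
     (p + b) * ((p + b - 1) * s^2 + 1) * (s^2 + 1) powr ((p + b)/2 - 2) * angular_factor C a b s
     - b / (2*C) * (2*p + a + b - 1) * s * (s^2 + 1) powr ((p + a - 3)/2)"

definition phi1_diffusion :: "real \<Rightarrow> real \<Rightarrow> real \<Rightarrow> real \<Rightarrow> real \<Rightarrow> real \<Rightarrow> real \<Rightarrow> real" where
  "phi1_diffusion \<kappa>1 \<kappa>2 C p a b =
     diffusion_profile \<kappa>1 \<kappa>2 p (phi1_profile C p a b) (phi1_profile' C p a b) (phi1_profile'' C p a b)"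

lemma angular_factor_has_derivative:
  "(angular_factor C a b has_real_derivative - (b / (2*C) * (s^2 + 1) powr ((a - b - 1)/2))) (at s)"
proof -
  have "continuous_on UNIV (\<lambda>t::real. (t^2 + 1) powr ((a - b - 1)/2))"
    by (intro continuous_intros) auto
  from has_real_derivative_LBINT_lower[OF this] show ?thesis
    unfolding angular_factor_def[abs_def] by (rule DERIV_cong[OF DERIV_add[OF DERIV_const DERIV_cmult]]) simp
qed

lemma phi1_profile_has_derivative:
  "(phi1_profile C p a b has_real_derivative phi1_profile' C p a b s) (at s)"
  unfolding phi1_profile_def[abs_def]
proof (rule DERIV_cong[OF DERIV_mult[OF has_real_derivative_sq_plus_one_powr angular_factor_has_derivative]])
  have "(s^2 + 1) powr ((p + b)/2) * (s^2 + 1) powr ((a - b - 1)/2) = (s^2 + 1) powr ((p + a - 1)/2)"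
    by (rule sq_plus_one_powr_mult) (simp add: field_simps)
  then show "2 * ((p + b)/2) * s * (s^2 + 1) powr ((p + b)/2 - 1) * angular_factor C a b s
      + - (b / (2*C) * (s^2 + 1) powr ((a - b - 1)/2)) * (s^2 + 1) powr ((p + b)/2)
    = phi1_profile' C p a b s"
    by (simp add: phi1_profile'_def algebra_simps)
qed

lemma phi1_profile'_has_derivative:
  "(phi1_profile' C p a b has_real_derivative phi1_profile'' C p a b s) (at s)"
proof -
  define c where "c = b / (2*C)"
  have e1: "(s^2 + 1) powr ((p + b)/2 - 1) = (s^2 + 1) * (s^2 + 1) powr ((p + b)/2 - 2)"
    using sq_plus_one_powr_mult[of 1 "(p + b)/2 - 2" "(p + b)/2 - 1" s] by simp
  have "(s^2 + 1) powr ((a - b - 1)/2) * (s^2 + 1) powr ((p + b)/2 - 1) = (s^2 + 1) powr ((p + a - 3)/2)"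
    by (rule sq_plus_one_powr_mult) (simp add: field_simps)
  then have e2: "(s^2 + 1) powr ((a - b - 1)/2) * (s * (s^2 + 1) powr ((p + b)/2 - 1))
      = s * (s^2 + 1) powr ((p + a - 3)/2)"
    by (simp add: mult.left_commute)
  have e3: "(p + b)/2 - 1 - 1 = (p + b)/2 - 2" "(p + a - 1)/2 - 1 = (p + a - 3)/2"
    by (simp_all add: field_simps)
  have d: "((\<lambda>s. s * (s^2 + 1) powr ((p + b)/2 - 1)) has_real_derivative
      ((p + b - 1) * s^2 + 1) * (s^2 + 1) powr ((p + b)/2 - 2)) (at s)"
    by (rule DERIV_cong[OF DERIV_mult[OF DERIV_ident has_real_derivative_sq_plus_one_powr]])
      (simp only: e1 e3, simp add: algebra_simps power2_eq_square)
  have "phi1_profile' C p a b = (\<lambda>s. (p + b) * (s * (s^2 + 1) powr ((p + b)/2 - 1) * angular_factor C a b s)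
      - b / (2*C) * (s^2 + 1) powr ((p + a - 1)/2))"
    by (auto simp: phi1_profile'_def mult.assoc)
  then show ?thesis
    by (simp only:) (rule DERIV_cong[OF DERIV_diff[OF DERIV_cmult[OF DERIV_mult[OF d angular_factor_has_derivative]]
          DERIV_cmult[OF has_real_derivative_sq_plus_one_powr]]],
        simp only: mult_minus_left mult.assoc e2 e3 phi1_profile''_def c_def[symmetric], simp add: field_simps)
qed

lemma drift_profile_phi1_profile:
  assumes "b = alpha_h h * p - (1 - h) * q"
  shows "drift_profile h p q (phi1_profile C p a b) (phi1_profile' C p a b) s
     = - (b / (2*C) * (s^2 + 1) powr ((p + a + 1)/2))"
proof -
  have e1: "(s^2 + 1) powr ((p + b)/2) = (s^2 + 1) * (s^2 + 1) powr ((p + b)/2 - 1)"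
    using sq_plus_one_powr_mult[of 1 "(p + b)/2 - 1"] by simp
  have e2: "(s^2 + 1) powr ((p + a + 1)/2) = (s^2 + 1) * (s^2 + 1) powr ((p + a - 1)/2)"
    using sq_plus_one_powr_mult[of 1 "(p + a - 1)/2" "(p + a + 1)/2" s] by (simp add: field_simps)
  have "p + alpha_h h * p - (1 - h) * q = p + b"
    using assms by simp
  then show ?thesis
    unfolding drift_profile_def phi1_profile_def phi1_profile'_def
    by (simp only: e1 e2) (simp add: algebra_simps add_divide_distrib)
qed

lemma angular_weight_bound:
  fixes t x a :: real
  assumes "0 < x" "0 \<le> a" "t \<le> x"
  shows "min 1 (sqrt (x^2 + 1) / 2) * t * (t^2 + 1) powr (-(1 + a)/2) \<le> x/2"
proof (cases "t \<le> 0")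
  case True
  have "min 1 (sqrt (x^2 + 1) / 2) * t \<le> 0"
    using True by (intro mult_nonneg_nonpos) auto
  then have "min 1 (sqrt (x^2 + 1) / 2) * t * (t^2 + 1) powr (-(1 + a)/2) \<le> 0"
    by (simp add: mult_nonpos_nonneg)
  then show ?thesis
    using assms(1) by linarith
next
  case False
  define \<theta> where "\<theta> = min 1 (sqrt (x^2 + 1) / 2)"
  have "(t^2 + 1) powr (-(1 + a)/2) \<le> (t^2 + 1) powr (-1/2)"
    using assms(2) by (intro powr_mono) auto
  also have "\<dots> = 1 / sqrt (t^2 + 1)"
    by (simp add: powr_minus_divide powr_half_sqrt)
  finally have "t * (t^2 + 1) powr (-(1 + a)/2) \<le> t * (1 / sqrt (t^2 + 1))"
    using False by (intro mult_left_mono) auto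
  also have "\<dots> = t / sqrt (t^2 + 1)"
    by simp
  also have "\<dots> \<le> x / sqrt (x^2 + 1)"
    using False assms(3) by (intro divide_sqrt_sq_plus_one_mono) auto
  finally have "\<theta> * (t * (t^2 + 1) powr (-(1 + a)/2)) \<le> \<theta> * (x / sqrt (x^2 + 1))"
    by (intro mult_left_mono) (auto simp: \<theta>_def)
  also have "\<dots> \<le> sqrt (x^2 + 1) / 2 * (x / sqrt (x^2 + 1))"
    using assms(1) by (intro mult_right_mono) (auto simp: \<theta>_def)
  also have "\<dots> = x/2"
    by simp
  finally show ?thesis
    by (simp add: \<theta>_def mult.assoc)
qed

lemma angular_factor_lower_bound:
  assumes "C > 0" "0 < b" "b < a" "s \<le> 1/C"
  shows "min 1 (sqrt ((1/C)^2 + 1) / 2) * (s^2 + 1) powr (-b/2) \<le> angular_factor C a b s"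
proof -
  define x where "x = 1/C"
  define \<theta> where "\<theta> = min 1 (sqrt (x^2 + 1) / 2)"
  define D where "D t = angular_factor C a b t - \<theta> * (t^2 + 1) powr (-b/2)" for t
  \<comment> \<open>\<open>D\<close> is nonincreasing on \<open>(-\<infinity>, x]\<close> and nonnegative at \<open>x\<close>.\<close>
  have x: "x > 0"
    using assms(1) by (simp add: x_def)
  have "D x \<le> D s"
  proof (rule DERIV_nonpos_imp_nonincreasing[of s x D])
    fix t assume "t \<le> x"
    define P where "P = t^2 + 1"
    have split: "P powr (-b/2 - 1) = P powr ((a - b - 1)/2) * P powr (-(1 + a)/2)"
      by (simp add: P_def powr_add[symmetric] field_simps)
    have "(D has_real_derivative
        - (b / (2*C) * P powr ((a - b - 1)/2)) - \<theta> * (2 * (-b/2) * t * P powr (-b/2 - 1))) (at t)"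
      unfolding D_def[abs_def] P_def
      by (intro DERIV_diff DERIV_cmult angular_factor_has_derivative has_real_derivative_sq_plus_one_powr)
    moreover have "- (b / (2*C) * P powr ((a - b - 1)/2)) - \<theta> * (2 * (-b/2) * t * P powr (-b/2 - 1))
        = b * P powr ((a - b - 1)/2) * (\<theta> * t * P powr (-(1 + a)/2) - x/2)"
      unfolding split x_def by (simp add: algebra_simps)
    moreover have "\<theta> * t * P powr (-(1 + a)/2) \<le> x/2"
      unfolding \<theta>_def P_def using x assms(2,3) \<open>t \<le> x\<close> by (intro angular_weight_bound) auto
    ultimately show "\<exists>y. (D has_real_derivative y) (at t) \<and> y \<le> 0"
      using assms(2) by (auto intro!: mult_nonneg_nonpos)
  qed (use assms(4) in \<open>simp add: x_def\<close>)
  moreover have "D x = (1 - \<theta>) * (x^2 + 1) powr (-b/2)"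
  proof -
    have "C powr (-2) + 1 = x^2 + 1"
      using assms(1) by (simp add: x_def powr_minus_divide power2_eq_square)
    then have "angular_factor C a b x = (x^2 + 1) powr (-b/2)"
      by (simp add: angular_factor_def x_def[symmetric] powr_minus_divide)
    then show ?thesis
      by (simp add: D_def algebra_simps)
  qed
  moreover have "0 \<le> (1 - \<theta>) * (x^2 + 1) powr (-b/2)"
    by (simp add: \<theta>_def)
  ultimately have "0 \<le> D s"
    by linarith
  then show ?thesis
    by (simp add: D_def \<theta>_def x_def)
qed

lemma phi1_profile_lower_bound:
  assumes "C > 0" "0 < b" "b < a" "s \<le> 1/C"
  shows "min 1 (sqrt ((1/C)^2 + 1) / 2) * (s^2 + 1) powr (p/2) \<le> phi1_profile C p a b s"
proof -
  define \<theta> where "\<theta> = min 1 (sqrt ((1/C)^2 + 1) / 2)"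
  have "\<theta> * (s^2 + 1) powr (p/2) = (s^2 + 1) powr ((p + b)/2) * (\<theta> * (s^2 + 1) powr (-b/2))"
    using sq_plus_one_powr_mult[of "(p + b)/2" "-b/2" "p/2" s] by (simp add: field_simps)
  also have "\<dots> \<le> phi1_profile C p a b s"
    unfolding phi1_profile_def \<theta>_def by (intro mult_left_mono angular_factor_lower_bound assms) simp
  finally show ?thesis
    by (simp add: \<theta>_def)
qed

lemma continuous_on_phi1_profile: "continuous_on S (phi1_profile C p a b)"
  using phi1_profile_has_derivative
  by (intro continuous_at_imp_continuous_on ballI DERIV_isCont) blast

lemma continuous_on_phi1_profile': "continuous_on S (phi1_profile' C p a b)"
  using phi1_profile'_has_derivative
  by (intro continuous_at_imp_continuous_on ballI DERIV_isCont) blast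

lemma continuous_on_phi1_profile'': "continuous_on S (phi1_profile'' C p a b)"
proof -
  have "continuous_on S (angular_factor C a b)"
    using angular_factor_has_derivative
    by (intro continuous_at_imp_continuous_on ballI DERIV_isCont) blast
  then show ?thesis
    unfolding phi1_profile''_def[abs_def] by (intro continuous_intros) auto
qed

section \<open>Estimates for \<open>\<phi>\<^sub>1\<close>\<close>

lemma radius_powr_mult_ratio_powr:
  fixes u v p b :: real
  shows "sqrt (u^2 + v^2) powr p * \<bar>sqrt (u^2 + v^2) / v\<bar> powr b
    = \<bar>v\<bar> powr p * ((u / \<bar>v\<bar>)^2 + 1) powr ((p + b)/2)"
proof (cases "v = 0")
  case False
  define V where "V = \<bar>v\<bar>"
  define s where "s = u / V"
  have V: "V > 0"
    using False by (simp add: V_def)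
  have "u^2 + v^2 = V^2 * (s^2 + 1)"
    using V by (simp add: V_def s_def field_simps)
  then have r: "sqrt (u^2 + v^2) = V * sqrt (s^2 + 1)"
    using V by (simp add: real_sqrt_mult)
  have "\<bar>sqrt (u^2 + v^2) / v\<bar> = sqrt (s^2 + 1)"
    unfolding r using V by (simp add: V_def abs_mult)
  then have "sqrt (u^2 + v^2) powr p * \<bar>sqrt (u^2 + v^2) / v\<bar> powr b
      = V powr p * (sqrt (s^2 + 1) powr p * sqrt (s^2 + 1) powr b)"
    unfolding r using V by (simp add: powr_mult)
  also have "sqrt (s^2 + 1) powr p * sqrt (s^2 + 1) powr b = (s^2 + 1) powr ((p + b)/2)"
    by (simp add: powr_half_sqrt[symmetric] powr_powr add_divide_distrib flip: powr_add)
  finally show ?thesis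
    by (simp add: V_def s_def)
qed simp

lemma phi1_eq_profile_fun: "phi1 C p q a b = profile_fun p q (phi1_profile C p a b)"
proof (intro ext)
  fix u v z
  have "phi1 C p q a b u v z = (sqrt (u^2 + v^2) powr p * \<bar>sqrt (u^2 + v^2) / v\<bar> powr b)
      * z powr q * angular_factor C a b (u / \<bar>v\<bar>)"
    unfolding phi1_def angular_factor_def Let_def by (simp add: algebra_simps)
  then show "phi1 C p q a b u v z = profile_fun p q (phi1_profile C p a b) u v z"
    unfolding radius_powr_mult_ratio_powr profile_fun_def phi1_profile_def by (simp add: algebra_simps)
qed

lemma abs_powr_le_radius_powr:
  assumes "0 \<le> p + a"
  shows "\<bar>v\<bar> powr p \<le> sqrt (u^2 + v^2) powr p * \<bar>sqrt (u^2 + v^2) / v\<bar> powr a"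
proof -
  have "1 \<le> ((u / \<bar>v\<bar>)^2 + 1) powr ((p + a)/2)"
    using assms by (intro ge_one_powr_ge_zero) auto
  then show ?thesis
    unfolding radius_powr_mult_ratio_powr by (simp add: mult_le_cancel_left1)
qed

lemma phi1_lower_bound:
  assumes C: "C > 0" and b: "0 < b" "b < a" and u: "u \<le> \<bar>v\<bar> / C" and v: "v \<noteq> 0"
  shows "min 1 (sqrt ((1/C)^2 + 1) / 2) * sqrt (u^2 + v^2) powr p * z powr q \<le> phi1 C p q a b u v z"
proof -
  define \<theta> where "\<theta> = min 1 (sqrt ((1/C)^2 + 1) / 2)"
  have "sqrt (u^2 + v^2) powr p = \<bar>v\<bar> powr p * ((u / \<bar>v\<bar>)^2 + 1) powr (p/2)"
    using radius_powr_mult_ratio_powr[of u v p 0] v by simp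
  then have "\<theta> * sqrt (u^2 + v^2) powr p * z powr q
      = \<bar>v\<bar> powr p * z powr q * (\<theta> * ((u / \<bar>v\<bar>)^2 + 1) powr (p/2))"
    by (simp add: mult_ac)
  also have "\<dots> \<le> \<bar>v\<bar> powr p * z powr q * phi1_profile C p a b (u / \<bar>v\<bar>)"
    unfolding \<theta>_def using u v C by (intro mult_left_mono phi1_profile_lower_bound C b) (auto simp: field_simps)
  finally show ?thesis
    by (simp add: phi1_eq_profile_fun profile_fun_def \<theta>_def)
qed

lemma Lop_phi1_eq:
  assumes b: "b = alpha_h h * p - (1 - h) * q" and v: "v \<noteq> 0" and z: "z > 0"
  shows "Lop \<gamma> h \<kappa>1 \<kappa>2 (phi1 C p q a b) u v z = - \<gamma> * p * phi1 C p q a b u v z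
    + (profile_fun (p - 2) q (phi1_diffusion \<kappa>1 \<kappa>2 C p a b) u v z
       - b / (2*C) * (sqrt (u^2 + v^2) powr (p + 1) * z powr q * \<bar>sqrt (u^2 + v^2) / v\<bar> powr a))
      / z powr (2/3)"
proof -
  have "profile_fun (p + 1) q (drift_profile h p q (phi1_profile C p a b) (phi1_profile' C p a b)) u v z
      = - (b / (2*C) * (\<bar>v\<bar> powr (p + 1) * ((u / \<bar>v\<bar>)^2 + 1) powr ((p + 1 + a)/2)) * z powr q)"
    unfolding profile_fun_def drift_profile_phi1_profile[OF b] by (simp add: add_ac mult_ac)
  also have "\<dots> = - (b / (2*C) * (sqrt (u^2 + v^2) powr (p + 1) * z powr q * \<bar>sqrt (u^2 + v^2) / v\<bar> powr a))"
    unfolding radius_powr_mult_ratio_powr[symmetric] by (simp only: mult_ac)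
  finally have drift: "profile_fun (p + 1) q (drift_profile h p q (phi1_profile C p a b) (phi1_profile' C p a b)) u v z
      = - (b / (2*C) * (sqrt (u^2 + v^2) powr (p + 1) * z powr q * \<bar>sqrt (u^2 + v^2) / v\<bar> powr a))" .
  show ?thesis
    unfolding phi1_eq_profile_fun Lop_profile_fun[OF phi1_profile_has_derivative phi1_profile'_has_derivative v z]
      drift phi1_diffusion_def by simp
qed

lemma phi1_diffusion_le:
  assumes p: "0 \<le> p" and a: "0 \<le> a" and b: "0 < b" and C: "C > 0"
  shows "\<exists>T. \<forall>u v z. T \<le> \<bar>v\<bar> \<longrightarrow> - C * \<bar>v\<bar> \<le> u \<longrightarrow> u \<le> \<bar>v\<bar> / C \<longrightarrow>
    profile_fun (p - 2) q (phi1_diffusion \<kappa>1 \<kappa>2 C p a b) u v z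
    \<le> b / (2*C) / 2 * (sqrt (u^2 + v^2) powr (p + 1) * z powr q * \<bar>sqrt (u^2 + v^2) / v\<bar> powr a)"
proof -
  have "continuous_on {-C..1/C} (phi1_diffusion \<kappa>1 \<kappa>2 C p a b)"
    unfolding phi1_diffusion_def diffusion_profile_def[abs_def]
    by (intro continuous_intros continuous_on_phi1_profile continuous_on_phi1_profile'
        continuous_on_phi1_profile'')
  from profile_fun_bounded_on_cone[OF C this, of "p - 2" q] obtain M where M:
    "\<And>u v z. - C * \<bar>v\<bar> \<le> u \<Longrightarrow> u \<le> \<bar>v\<bar> / C \<Longrightarrow>
      \<bar>profile_fun (p - 2) q (phi1_diffusion \<kappa>1 \<kappa>2 C p a b) u v z\<bar> \<le> M * \<bar>v\<bar> powr (p - 2) * z powr q"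
    by blast
  define c where "c = b / (2*C)"
  have c: "c > 0"
    using b C by (simp add: c_def)
  show ?thesis
  proof (intro exI[of _ "max 1 (2 * M / c)"] allI impI)
    fix u v z :: real
    assume VT: "max 1 (2 * M / c) \<le> \<bar>v\<bar>" and cone: "- C * \<bar>v\<bar> \<le> u" "u \<le> \<bar>v\<bar> / C"
    define V where "V = \<bar>v\<bar>"
    have V: "1 \<le> V" and "M \<le> c/2 * V"
      using VT c by (auto simp: V_def field_simps)
    moreover have "c/2 * V \<le> c/2 * V^3"
      using power_increasing[of 1 3 V] V c by (intro mult_left_mono) auto
    ultimately have "M * V powr (p - 2) \<le> c/2 * V^3 * V powr (p - 2)"
      by (intro mult_right_mono) auto
    also have "\<dots> = c/2 * V powr (p + 1)"
    proof -
      have "V^3 * V powr (p - 2) = V powr 3 * V powr (p - 2)"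
        using V by simp
      also have "\<dots> = V powr (p + 1)"
        by (simp add: add.commute flip: powr_add)
      finally show ?thesis
        by (simp add: mult.assoc)
    qed
    finally have "M * V powr (p - 2) * z powr q \<le> c/2 * V powr (p + 1) * z powr q"
      by (intro mult_right_mono) auto
    also have "\<dots> \<le> c/2 * (sqrt (u^2 + v^2) powr (p + 1) * \<bar>sqrt (u^2 + v^2) / v\<bar> powr a) * z powr q"
      unfolding V_def using c p a by (intro mult_left_mono mult_right_mono abs_powr_le_radius_powr) auto
    finally have "M * \<bar>v\<bar> powr (p - 2) * z powr q
        \<le> b / (2*C) / 2 * (sqrt (u^2 + v^2) powr (p + 1) * z powr q * \<bar>sqrt (u^2 + v^2) / v\<bar> powr a)"
      by (simp add: V_def c_def mult_ac)
    with abs_le_D1[OF M[OF cone]]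
    show "profile_fun (p - 2) q (phi1_diffusion \<kappa>1 \<kappa>2 C p a b) u v z
      \<le> b / (2*C) / 2 * (sqrt (u^2 + v^2) powr (p + 1) * z powr q * \<bar>sqrt (u^2 + v^2) / v\<bar> powr a)"
      by (rule order_trans)
  qed
qed

lemma Lop_phi1_le:
  assumes \<gamma>: "0 \<le> \<gamma>" and p: "0 \<le> p" and b: "b = alpha_h h * p - (1 - h) * q"
    and b0: "0 < b" and ba: "b < a" and C: "C > 0"
  shows "\<exists>T. \<forall>u v z. T \<le> \<bar>v\<bar> \<longrightarrow> - C * \<bar>v\<bar> \<le> u \<longrightarrow> u \<le> \<bar>v\<bar> / C \<longrightarrow> 0 < z \<longrightarrow> z \<le> 1 \<longrightarrow>
    Lop \<gamma> h \<kappa>1 \<kappa>2 (phi1 C p q a b) u v z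
      \<le> - (b / (2*C)) / 2 * sqrt (u^2 + v^2) powr (p + 1) * z powr q * \<bar>sqrt (u^2 + v^2) / v\<bar> powr a"
proof -
  obtain T where T: "\<And>u v z. T \<le> \<bar>v\<bar> \<Longrightarrow> - C * \<bar>v\<bar> \<le> u \<Longrightarrow> u \<le> \<bar>v\<bar> / C \<Longrightarrow>
    profile_fun (p - 2) q (phi1_diffusion \<kappa>1 \<kappa>2 C p a b) u v z
    \<le> b / (2*C) / 2 * (sqrt (u^2 + v^2) powr (p + 1) * z powr q * \<bar>sqrt (u^2 + v^2) / v\<bar> powr a)"
    using phi1_diffusion_le[OF p _ b0 C, of a q \<kappa>1 \<kappa>2] b0 ba by auto
  show ?thesis
  proof (intro exI[of _ "max 1 T"] allI impI)
    fix u v z :: real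
    assume VT: "max 1 T \<le> \<bar>v\<bar>" and cone: "- C * \<bar>v\<bar> \<le> u" "u \<le> \<bar>v\<bar> / C" and z: "0 < z" "z \<le> 1"
    define c where "c = b / (2*C)"
    define Y where "Y = sqrt (u^2 + v^2) powr (p + 1) * z powr q * \<bar>sqrt (u^2 + v^2) / v\<bar> powr a"
    define Z where "Z = z powr (2/3)"
    have v: "v \<noteq> 0"
      using VT by auto
    have Y: "0 \<le> Y" and Z: "0 < Z" "Z \<le> 1" and c: "0 < c"
      using z b0 C by (auto simp: Y_def Z_def c_def powr_le1)
    have "0 \<le> min 1 (sqrt ((1/C)^2 + 1) / 2) * sqrt (u^2 + v^2) powr p * z powr q"
      by simp
    then have "0 \<le> phi1 C p q a b u v z"
      using phi1_lower_bound[OF C b0 ba cone(2) v, of p z q] by linarith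
    then have damping: "- \<gamma> * p * phi1 C p q a b u v z \<le> 0"
      using \<gamma> p by (simp add: mult_nonneg_nonneg)
    have "(profile_fun (p - 2) q (phi1_diffusion \<kappa>1 \<kappa>2 C p a b) u v z
        - c * Y) / Z \<le> (c/2 * Y - c * Y) / Z"
      using T[OF _ cone] VT Z by (intro divide_right_mono diff_right_mono) (auto simp: c_def Y_def)
    with damping have "Lop \<gamma> h \<kappa>1 \<kappa>2 (phi1 C p q a b) u v z \<le> (c/2 * Y - c * Y) / Z"
      unfolding Lop_phi1_eq[OF b v z(1)] Y_def[symmetric] c_def[symmetric] Z_def[symmetric] by linarith
    also have "\<dots> \<le> - (c/2) * Y"
    proof -
      have "c/2 * Y * Z \<le> c/2 * Y"
        using Y Z c by (intro mult_left_le) auto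
      then have "c/2 * Y \<le> c/2 * Y / Z"
        using Z by (simp add: le_divide_eq)
      moreover have "(c/2 * Y - c * Y) / Z = - (c/2 * Y / Z)"
        by simp
      ultimately show ?thesis
        by linarith
    qed
    finally show "Lop \<gamma> h \<kappa>1 \<kappa>2 (phi1 C p q a b) u v z
      \<le> - (b / (2*C)) / 2 * sqrt (u^2 + v^2) powr (p + 1) * z powr q * \<bar>sqrt (u^2 + v^2) / v\<bar> powr a"
      by (simp add: Y_def c_def mult_ac)
  qed
qed

lemma Qop_phi1_sum:
  assumes "v \<noteq> 0" "z > 0"
  shows "Qop (\<lambda>u v z. phi1 C p1 q1 a1 b1 u v z + phi1 C p2 q2 a2 b2 u v z) u v z
    = ((p1/3 - q1) * phi1 C p1 q1 a1 b1 u v z + (p2/3 - q2) * phi1 C p2 q2 a2 b2 u v z) / z"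
  unfolding phi1_eq_profile_fun
  by (rule Qop_profile_fun_add[OF phi1_profile_has_derivative phi1_profile_has_derivative assms])

lemma Qop_phi1_sum_le:
  assumes p12: "p1 < p2" and p2: "0 \<le> p2" and q2: "p2/3 < q2"
    and b2: "0 < b2" and ba2: "b2 < a2" and C: "C > 0"
  shows "\<exists>T. \<forall>u v. T \<le> \<bar>v\<bar> \<longrightarrow> - C * \<bar>v\<bar> \<le> u \<longrightarrow> u \<le> \<bar>v\<bar> / C \<longrightarrow>
    Qop (\<lambda>u v z. phi1 C p1 q1 a1 b1 u v z + phi1 C p2 q2 a2 b2 u v z) u v 1
      \<le> - (q2/2 - p2/6) * sqrt (u^2 + v^2) powr p2"
proof -
  obtain M where M0: "\<forall>u v z. - C * \<bar>v\<bar> \<le> u \<longrightarrow> u \<le> \<bar>v\<bar> / C \<longrightarrow>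
      \<bar>profile_fun p1 q1 (phi1_profile C p1 a1 b1) u v z\<bar> \<le> M * \<bar>v\<bar> powr p1 * z powr q1"
    using profile_fun_bounded_on_cone[OF C continuous_on_phi1_profile] by blast
  have M: "\<bar>phi1 C p1 q1 a1 b1 u v 1\<bar> \<le> M * \<bar>v\<bar> powr p1" if "- C * \<bar>v\<bar> \<le> u" "u \<le> \<bar>v\<bar> / C" for u v
    using M0[rule_format, OF that, of 1] by (simp add: phi1_eq_profile_fun)
  define \<theta> where "\<theta> = min 1 (sqrt ((1/C)^2 + 1) / 2)"
  have \<theta>: "\<theta> > 1/2"
    using C by (simp add: \<theta>_def real_less_rsqrt)
  define d where "d = q2 - p2/3"
  have d: "d > 0"
    using q2 by (simp add: d_def)
  have "\<forall>\<^sub>F x in at_top. 0 < x \<and> \<bar>p1/3 - q1\<bar> * M * x powr p1 \<le> d * (\<theta> - 1/2) * x powr p2"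
    using eventually_gt_at_top eventually_powr_le_powr[OF p12] d \<theta> by (intro eventually_conj) auto
  then obtain T where T: "\<And>x. T \<le> x \<Longrightarrow> 0 < x \<and> \<bar>p1/3 - q1\<bar> * M * x powr p1 \<le> d * (\<theta> - 1/2) * x powr p2"
    unfolding eventually_at_top_linorder by blast
  show ?thesis
  proof (intro exI[of _ T] allI impI)
    fix u v :: real
    assume VT: "T \<le> \<bar>v\<bar>" and cone: "- C * \<bar>v\<bar> \<le> u" "u \<le> \<bar>v\<bar> / C"
    define r where "r = sqrt (u^2 + v^2)"
    have v: "v \<noteq> 0"
      using T[OF VT] by auto
    have "(p1/3 - q1) * phi1 C p1 q1 a1 b1 u v 1 \<le> \<bar>p1/3 - q1\<bar> * \<bar>phi1 C p1 q1 a1 b1 u v 1\<bar>"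
      by (metis abs_ge_self abs_mult)
    also have "\<dots> \<le> \<bar>p1/3 - q1\<bar> * M * \<bar>v\<bar> powr p1"
      using M[OF cone] by (simp add: mult.assoc mult_left_mono)
    also have "\<dots> \<le> d * (\<theta> - 1/2) * \<bar>v\<bar> powr p2"
      using T[OF VT] by blast
    also have "\<dots> \<le> d * (\<theta> - 1/2) * r powr p2"
      unfolding r_def using d \<theta> p2 by (intro mult_left_mono powr_mono2 real_sqrt_ge_abs2) auto
    finally have phi1_1: "(p1/3 - q1) * phi1 C p1 q1 a1 b1 u v 1 \<le> d * (\<theta> - 1/2) * r powr p2" .
    have "d * (\<theta> * r powr p2) \<le> d * phi1 C p2 q2 a2 b2 u v 1"
      using phi1_lower_bound[OF C b2 ba2 cone(2) v, of p2 1 q2] d by (simp add: \<theta>_def r_def)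
    with phi1_1 have "(p1/3 - q1) * phi1 C p1 q1 a1 b1 u v 1 + (p2/3 - q2) * phi1 C p2 q2 a2 b2 u v 1
        \<le> - (q2/2 - p2/6) * r powr p2"
      by (simp add: d_def algebra_simps)
    then show "Qop (\<lambda>u v z. phi1 C p1 q1 a1 b1 u v z + phi1 C p2 q2 a2 b2 u v z) u v 1
      \<le> - (q2/2 - p2/6) * sqrt (u^2 + v^2) powr p2"
      by (simp add: Qop_phi1_sum[OF v zero_less_one] r_def)
  qed
qed

lemma eventually_region1:
  assumes C: "C > 0"
    and large: "\<exists>T. \<forall>u v z. T \<le> \<bar>v\<bar> \<longrightarrow> - C * \<bar>v\<bar> \<le> u \<longrightarrow> u \<le> \<bar>v\<bar> / C \<longrightarrow> 0 < z \<longrightarrow> z \<le> 1 \<longrightarrow> P u v z"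
  shows "\<forall>\<^sub>F rs in at_top. \<forall>u v z. region1 rs C u v z \<longrightarrow> P u v z"
proof -
  obtain T where T: "\<And>u v z. T \<le> \<bar>v\<bar> \<Longrightarrow> - C * \<bar>v\<bar> \<le> u \<Longrightarrow> u \<le> \<bar>v\<bar> / C \<Longrightarrow> 0 < z \<Longrightarrow> z \<le> 1 \<Longrightarrow> P u v z"
    using large by blast
  define K where "K = 1 + C + 1/C"
  have K: "K > 0"
    using C by (simp add: K_def add_pos_pos)
  show ?thesis
    unfolding eventually_at_top_linorder
  proof (intro exI[of _ "K * T"] allI impI)
    fix rs u v z :: real
    assume rs: "K * T \<le> rs" and reg: "region1 rs C u v z"
    then have lo: "- C * \<bar>v\<bar> \<le> u" and hi: "u \<le> \<bar>v\<bar> / C"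
      by (simp_all add: region1_def)
    have "(C + 1/C) * \<bar>v\<bar> = C * \<bar>v\<bar> + \<bar>v\<bar> / C" "0 \<le> C * \<bar>v\<bar>" "0 \<le> \<bar>v\<bar> / C"
      using C by (simp_all add: algebra_simps)
    then have "\<bar>u\<bar> \<le> (C + 1/C) * \<bar>v\<bar>"
      using lo hi by linarith
    then have "sqrt (u^2 + v^2) \<le> K * \<bar>v\<bar>"
      using sqrt_sum_squares_le_sum_abs[of u v] by (simp add: K_def algebra_simps)
    with rs reg have "K * T \<le> K * \<bar>v\<bar>"
      by (simp add: region1_def)
    then have "T \<le> \<bar>v\<bar>"
      using K by simp
    with lo hi reg show "P u v z"
      by (auto simp: region1_def intro: T)
  qed
qed

theorem lemma6p2:
  fixes \<gamma> h \<kappa>1 \<kappa>2 p1 p2 q1 q2 a1 a2 b1 b2 C :: real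
  assumes "\<gamma> > 0" and "0 < h" and "h < 1" and "\<kappa>1 > 0" and "\<kappa>2 > 0"
    and "p1 > 0" and "p2 > 0" and "q1 = 0" and "q2 > 0"
    and "b1 = alpha_h h * p1 - (1 - h) * q1" and "0 < b1" and "b1 < a1" and "a1 < 1"
    and "b2 = alpha_h h * p2 - (1 - h) * q2" and "0 < b2" and "b2 < a2" and "a2 < 1"
    and "q2 > p2 / 3 + a2 / 2" and "p2 > p1" and "p2 + 3/2 * a2 > p1 + 3/2 * a1"
    and "C > 0"
  shows "\<exists>R0. \<forall>rs \<ge> R0. rs > 0 \<longrightarrow>
     (\<forall>u v z. region1 rs C u v z \<longrightarrow>
        Lop \<gamma> h \<kappa>1 \<kappa>2 (phi1 C p1 q1 a1 b1) u v z
          \<le> - (b1 / (2*C)) / 2 * sqrt (u^2+v^2) powr (p1 + 1) * z powr q1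
              * \<bar>sqrt (u^2+v^2) / v\<bar> powr a1
      \<and> Lop \<gamma> h \<kappa>1 \<kappa>2 (phi1 C p2 q2 a2 b2) u v z
          \<le> - (b2 / (2*C)) / 2 * sqrt (u^2+v^2) powr (p2 + 1) * z powr q2
              * \<bar>sqrt (u^2+v^2) / v\<bar> powr a2)
   \<and> (\<forall>u v. region1 rs C u v 1 \<longrightarrow>
        Qop (\<lambda>u v z. phi1 C p1 q1 a1 b1 u v z + phi1 C p2 q2 a2 b2 u v z) u v 1
          \<le> - (q2/2 - p2/6) * sqrt (u^2+v^2) powr p2)"
proof -
  have "0 \<le> \<gamma>" "0 \<le> p1" "0 \<le> p2" "p2/3 < q2"
    using assms by linarith+
  note L1 = eventually_region1[OF \<open>C > 0\<close>
      Lop_phi1_le[OF \<open>0 \<le> \<gamma>\<close> \<open>0 \<le> p1\<close> assms(10-12) \<open>C > 0\<close>, of \<kappa>1 \<kappa>2]]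
  note L2 = eventually_region1[OF \<open>C > 0\<close>
      Lop_phi1_le[OF \<open>0 \<le> \<gamma>\<close> \<open>0 \<le> p2\<close> assms(14-16) \<open>C > 0\<close>, of \<kappa>1 \<kappa>2]]
  have Q: "\<forall>\<^sub>F rs in at_top. \<forall>u v z. region1 rs C u v z \<longrightarrow>
      Qop (\<lambda>u v z. phi1 C p1 q1 a1 b1 u v z + phi1 C p2 q2 a2 b2 u v z) u v 1
        \<le> - (q2/2 - p2/6) * sqrt (u^2+v^2) powr p2"
    using Qop_phi1_sum_le[OF \<open>p1 < p2\<close> \<open>0 \<le> p2\<close> \<open>p2/3 < q2\<close> assms(15,16) \<open>C > 0\<close>]
    by (intro eventually_region1 \<open>C > 0\<close>) blast
  show ?thesis
    unfolding eventually_at_top_linorder[symmetric]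
    using eventually_conj[OF eventually_conj[OF L1 L2] Q] by (rule eventually_mono) blast
qed

end
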